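(* Let $f:E\to\mathbb{R}$ be convex (or continuously differentiable and $1$-weakly-quasi-convex) with a minimizer $x_*$, let $\varepsilon>0$ and let $\Theta\ge V(x_*,x^0)$. Then the iterates of Algorithm UAGMsDR with accuracy $\varepsilon$ satisfy, for every $k\ge1$, $$f(x^k)-f(x_* )\le\frac{V(x_*,x^0)}{A_k}+\frac\varepsilon2.$$ Moreover, for every $\nu\in[0,1]$ with $M_\nu<\infty$ and every integer $$N\ge 2^{\frac{2+4\nu}{1+3\nu}}\left[\frac{1-\nu}{1+\nu}\right]^{\frac{1-\nu}{1+3\nu}}\left[\frac{M_\nu}{\varepsilon}\right]^{\frac{2}{1+3\nu}}\Theta^{\frac{1+\nu}{1+3\nu}}$$ (with the factor $\left[\frac{1-\nu}{1+\nu}\right]^{\frac{1-\nu}{1+3\nu}}$ interpreted as $1$ when $\nu=1$), one has $f(x^N)-f(x_* )\le\varepsilon$.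
   Context: $E$ is a finite-dimensional real vector space with a norm $\|\cdot\|$; $E^*$ is its dual, $\langle g,x\rangle$ denotes the value of $g\in E^*$ at $x\in E$, and $\|g\|_*=\max\{\langle g,x\rangle:\|x\|\le 1\}$. For $g\in E^*$, $g^{\#}$ denotes a (fixed) element $s\in E$ with $\|s\|\le 1$ and $\langle g,s\rangle=\|g\|_*$. A prox-function $d:E\to\mathbb{R}$ is continuously differentiable, convex, $1$-strongly convex with respect to $\|\cdot\|$ and satisfies $\min_E d=0$; its Bregman divergence is $V(x,z)=d(x)-d(z)-\langle\nabla d(z),x-z\rangle$. $\nabla f(x)$ denotes the gradient of $f$ if $f$ is differentiable and otherwise a subgradient of the convex function $f$ (as selected by the algorithm). For $\nu\in[0,1]$, $M_\nu\in(0,+\infty]$ denotes the smallest constant such that $\|\nabla f(x)-\nabla f(y)\|_*\le M_\nu\|x-y\|^\nu$ for all $x,y\in E$ ($M_\nu=+\infty$ if no such constant exists). A differentiable $f$ with minimizer $x_*$ is $1$-weakly-quasi-convex if $f(x)-f(x_* )\le\langle\nabla f(x),x-x_*\rangle$ for all $x$. Algorithm UAGMsDR (input $x^0\in E$, accuracy $\varepsilon>0$): set $A_0=0$, $v^0=x^0$, $\psi_0(x)=V(x,x^0)$. For $k=0,1,2,\dots$: 1. Choose $\beta_k\in\arg\min_{\beta\in[0,1]}f(v^k+\beta(x^k-v^k))$, set $y^k=v^k+\beta_k(x^k-v^k)$, and choose $\nabla f(y^k)$ (the gradient, or a subgradient in the convex nonsmooth case) such that $\langle\nabla f(y^k),v^k-y^k\rangle\ge0$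 (such a choice exists by optimality of $\beta_k$). 2. $h_{k+1}\in\arg\min_{h\ge0}f(y^k-h(\nabla f(y^k))^{\#})$, $x^{k+1}=y^k-h_{k+1}(\nabla f(y^k))^{\#}$; $a_{k+1}$ is the largest solution of $f(y^k)-\frac{a_{k+1}^2}{2(A_k+a_{k+1})}\|\nabla f(y^k)\|_*^2+\frac{\varepsilon a_{k+1}}{2(A_k+a_{k+1})}=f(x^{k+1})$. 3. $A_{k+1}=A_k+a_{k+1}$; $\psi_{k+1}(x)=\psi_k(x)+a_{k+1}\{f(y^k)+\langle\nabla f(y^k),x-y^k\rangle\}$; $v^{k+1}=\arg\min_{x\in E}\psi_{k+1}(x)$. All minima are assumed attained, and $\nabla f(y^k)\ne0$ for all iterations considered. *)

theory Defs
  imports "HOL-Analysis.Analysis"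
begin

text \<open>The space E is modelled by a type 'a of class euclidean_space (a finite-dimensional
real vector space).  The norm of the paper is an arbitrary norm nrm on 'a (NOT the
built-in Euclidean norm).  The dual space E* is identified with 'a via the inner
product: the functional g acts by x |-> g \<bullet> x.\<close>

definition is_norm :: "('a::real_vector \<Rightarrow> real) \<Rightarrow> bool" where
  "is_norm nrm \<longleftrightarrow> (\<forall>x. 0 \<le> nrm x) \<and> (\<forall>x. nrm x = 0 \<longleftrightarrow> x = 0)
     \<and> (\<forall>x y. nrm (x + y) \<le> nrm x + nrm y) \<and> (\<forall>c x. nrm (c *\<^sub>R x) = \<bar>c\<bar> * nrm x)"

definition dual_norm :: "('a::real_inner \<Rightarrow> real) \<Rightarrow> 'a \<Rightarrow> real" where
  "dual_norm nrm g = Sup ((\<lambda>x. g \<bullet> x) ` {x. nrm x \<le> 1})"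

definition strongly_convex_1 :: "('a::real_vector \<Rightarrow> real) \<Rightarrow> ('a \<Rightarrow> real) \<Rightarrow> bool" where
  "strongly_convex_1 nrm d \<longleftrightarrow> (\<forall>x y t. 0 \<le> t \<and> t \<le> 1 \<longrightarrow>
     d ((1 - t) *\<^sub>R x + t *\<^sub>R y) \<le> (1 - t) * d x + t * d y - t * (1 - t) / 2 * (nrm (x - y))\<^sup>2)"

definition prox_function :: "('a::euclidean_space \<Rightarrow> real) \<Rightarrow> ('a \<Rightarrow> real) \<Rightarrow> ('a \<Rightarrow> 'a) \<Rightarrow> bool" where
  "prox_function nrm d gd \<longleftrightarrow> (\<forall>x. (d has_derivative (\<lambda>h. gd x \<bullet> h)) (at x))
     \<and> continuous_on UNIV gd \<and> convex_on UNIV d \<and> strongly_convex_1 nrm d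
     \<and> (\<forall>x. 0 \<le> d x) \<and> (\<exists>x. d x = 0)"

definition bregman :: "('a::real_inner \<Rightarrow> real) \<Rightarrow> ('a \<Rightarrow> 'a) \<Rightarrow> 'a \<Rightarrow> 'a \<Rightarrow> real" where
  "bregman d gd x z = d x - d z - gd z \<bullet> (x - z)"

text \<open>The set of Hoelder constants for the (sub)gradient selection gf; M_nu is its
infimum (the smallest constant), and M_nu < infinity iff the set is nonempty.\<close>
definition holder_consts :: "('a::real_inner \<Rightarrow> real) \<Rightarrow> ('a \<Rightarrow> 'a) \<Rightarrow> real \<Rightarrow> real set" where
  "holder_consts nrm gf \<nu> = {M. 0 \<le> M \<and> (\<forall>x y. dual_norm nrm (gf x - gf y) \<le> M * nrm (x - y) powr \<nu>)}"

definition holder_M :: "('a::real_inner \<Rightarrow> real) \<Rightarrow> ('a \<Rightarrow> 'a) \<Rightarrow> real \<Rightarrow> real" where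
  "holder_M nrm gf \<nu> = Inf (holder_consts nrm gf \<nu>)"

definition uagm_bound :: "real \<Rightarrow> real \<Rightarrow> real \<Rightarrow> real \<Rightarrow> real" where
  "uagm_bound \<nu> M \<epsilon> \<Theta> =
     2 powr ((2 + 4 * \<nu>) / (1 + 3 * \<nu>))
     * (if \<nu> = 1 then 1 else ((1 - \<nu>) / (1 + \<nu>)) powr ((1 - \<nu>) / (1 + 3 * \<nu>)))
     * (M / \<epsilon>) powr (2 / (1 + 3 * \<nu>))
     * \<Theta> powr ((1 + \<nu>) / (1 + 3 * \<nu>))"

definition uagm_psi :: "('a::real_inner \<Rightarrow> real) \<Rightarrow> ('a \<Rightarrow> 'a) \<Rightarrow> ('a \<Rightarrow> real) \<Rightarrow> ('a \<Rightarrow> 'a)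
    \<Rightarrow> 'a \<Rightarrow> (nat \<Rightarrow> real) \<Rightarrow> (nat \<Rightarrow> 'a) \<Rightarrow> nat \<Rightarrow> 'a \<Rightarrow> real" where
  "uagm_psi d gd f gf x0 a y k z =
     bregman d gd z x0 + (\<Sum>i<k. a (Suc i) * (f (y i) + gf (y i) \<bullet> (z - y i)))"

definition uagm_iterates ::
  "('a::euclidean_space \<Rightarrow> real) \<Rightarrow> ('a \<Rightarrow> real) \<Rightarrow> ('a \<Rightarrow> 'a) \<Rightarrow> ('a \<Rightarrow> 'a) \<Rightarrow> ('a \<Rightarrow> real) \<Rightarrow> ('a \<Rightarrow> 'a)
   \<Rightarrow> real \<Rightarrow> (nat \<Rightarrow> 'a) \<Rightarrow> (nat \<Rightarrow> 'a) \<Rightarrow> (nat \<Rightarrow> 'a) \<Rightarrow> (nat \<Rightarrow> real) \<Rightarrow> (nat \<Rightarrow> real)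
   \<Rightarrow> (nat \<Rightarrow> real) \<Rightarrow> (nat \<Rightarrow> real) \<Rightarrow> bool" where
  "uagm_iterates nrm d gd sharp f gf \<epsilon> x v y \<beta> h a A \<longleftrightarrow>
     A 0 = 0 \<and> v 0 = x 0 \<and>
     (\<forall>k.
        \<comment> \<open>step 1\<close>
        0 \<le> \<beta> k \<and> \<beta> k \<le> 1 \<and>
        (\<forall>b. 0 \<le> b \<and> b \<le> 1 \<longrightarrow> f (v k + \<beta> k *\<^sub>R (x k - v k)) \<le> f (v k + b *\<^sub>R (x k - v k))) \<and>
        y k = v k + \<beta> k *\<^sub>R (x k - v k) \<and>
        gf (y k) \<bullet> (v k - y k) \<ge> 0 \<and>
        \<comment> \<open>step 2\<close>
        0 \<le> h (Suc k) \<and>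
        (\<forall>t. 0 \<le> t \<longrightarrow> f (y k - h (Suc k) *\<^sub>R sharp (gf (y k))) \<le> f (y k - t *\<^sub>R sharp (gf (y k)))) \<and>
        x (Suc k) = y k - h (Suc k) *\<^sub>R sharp (gf (y k)) \<and>
        A k + a (Suc k) \<noteq> 0 \<and>
        f (y k) - (a (Suc k))\<^sup>2 / (2 * (A k + a (Suc k))) * (dual_norm nrm (gf (y k)))\<^sup>2
          + \<epsilon> * a (Suc k) / (2 * (A k + a (Suc k))) = f (x (Suc k)) \<and>
        (\<forall>b. A k + b \<noteq> 0 \<and>
             f (y k) - b\<^sup>2 / (2 * (A k + b)) * (dual_norm nrm (gf (y k)))\<^sup>2
               + \<epsilon> * b / (2 * (A k + b)) = f (x (Suc k)) \<longrightarrow> b \<le> a (Suc k)) \<and>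
        \<comment> \<open>step 3\<close>
        A (Suc k) = A k + a (Suc k) \<and>
        (\<forall>z. uagm_psi d gd f gf (x 0) a y k (v k) \<le> uagm_psi d gd f gf (x 0) a y k z))"

end

theory Submission
  imports Defs
begin

text \<open>The estimate functions
  \<open>\<psi>\<^sub>k(z) = V(z,x\<^sup>0) + \<Sum>\<^sub>i\<^sub><\<^sub>k a\<^sub>i\<^sub>+\<^sub>1 (f(y\<^sup>i) + \<langle>\<nabla>f(y\<^sup>i), z - y\<^sup>i\<rangle>)\<close> are 1-strongly convex
  with minimisers \<open>v\<^sup>k\<close>. The equation defining \<open>a\<^sub>k\<^sub>+\<^sub>1\<close>, together with
  \<open>\<langle>\<nabla>f(y\<^sup>k), v\<^sup>k - y\<^sup>k\<rangle> \<ge> 0\<close>, preserves \<open>A\<^sub>k f(x\<^sup>k) - A\<^sub>k \<epsilon>/2 \<le> \<psi>\<^sub>k(v\<^sup>k)\<close>, and weak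
  quasi-convexity gives \<open>\<psi>\<^sub>k(x\<^sub>*) \<le> V(x\<^sub>*,x\<^sup>0) + A\<^sub>k f(x\<^sub>*)\<close>; this is the first bound.
  For the second, the exact line search along \<open>-(\<nabla>f(y\<^sup>k))\<^sup>#\<close> and the Hoelder descent lemma,
  relaxed to an inexact quadratic model by Young's inequality, give
  \<open>a\<^sub>k\<^sub>+\<^sub>1/A\<^sub>k\<^sub>+\<^sub>1 \<ge> C A\<^sub>k\<^sub>+\<^sub>1\<^bsup>-q\<^esup>\<close> with \<open>q = (1+\<nu>)/(1+3\<nu>)\<close>. By concavity of \<open>s \<mapsto> s\<^bsup>q\<^esup>\<close> the
  quantity \<open>A\<^sub>k\<^bsup>q\<^esup>\<close> then grows at least linearly, so \<open>A\<^sub>N \<ge> 2\<Theta>/\<epsilon>\<close> once \<open>N\<close> exceeds the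
  stated bound.\<close>

section \<open>Norms and dual norms\<close>

lemma is_norm_nonneg: "is_norm nrm \<Longrightarrow> 0 \<le> nrm x"
  and is_norm_eq_0: "is_norm nrm \<Longrightarrow> nrm x = 0 \<longleftrightarrow> x = 0"
  and is_norm_triangle: "is_norm nrm \<Longrightarrow> nrm (x + y) \<le> nrm x + nrm y"
  and is_norm_scaleR: "is_norm nrm \<Longrightarrow> nrm (c *\<^sub>R x) = \<bar>c\<bar> * nrm x"
  unfolding is_norm_def by blast+

lemma is_norm_zero: "is_norm nrm \<Longrightarrow> nrm 0 = 0"
  by (simp add: is_norm_eq_0)

lemma is_norm_pos: "is_norm nrm \<Longrightarrow> x \<noteq> 0 \<Longrightarrow> 0 < nrm x"
  using is_norm_nonneg is_norm_eq_0 by (metis order_le_less)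

lemma is_norm_minus_commute: "is_norm nrm \<Longrightarrow> nrm (x - y) = nrm (y - x)"
  using is_norm_scaleR[of nrm "-1" "x - y"] by simp

lemma is_norm_convex_on:
  assumes "is_norm nrm" shows "convex_on UNIV nrm"
proof (rule convex_onI)
  fix t :: real and x y assume t: "0 < t" "t < 1"
  have "nrm ((1 - t) *\<^sub>R x + t *\<^sub>R y) \<le> nrm ((1 - t) *\<^sub>R x) + nrm (t *\<^sub>R y)"
    using assms by (rule is_norm_triangle)
  also have "\<dots> = (1 - t) * nrm x + t * nrm y"
    using assms t by (simp add: is_norm_scaleR)
  finally show "nrm ((1 - t) *\<^sub>R x + t *\<^sub>R y) \<le> (1 - t) * nrm x + t * nrm y" .
qed auto

lemma is_norm_lower_bound:
  fixes nrm :: "'a::euclidean_space \<Rightarrow> real"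
  assumes N: "is_norm nrm" obtains c where "c > 0" "\<And>x. c * norm x \<le> nrm x"
proof -
  have "continuous_on (sphere 0 1) nrm"
    using convex_on_continuous[OF open_UNIV is_norm_convex_on[OF N]] continuous_on_subset by blast
  moreover have "sphere (0::'a) 1 \<noteq> {}"
    using nonempty_Basis by (auto intro: norm_Basis)
  ultimately obtain x0 where x0: "x0 \<in> sphere 0 1" "\<And>y. y \<in> sphere 0 1 \<Longrightarrow> nrm x0 \<le> nrm y"
    using continuous_attains_inf[OF compact_sphere] by metis
  have "nrm x0 * norm x \<le> nrm x" for x
  proof (cases "x = 0")
    case False
    have "nrm x0 \<le> nrm (x /\<^sub>R norm x)" using x0 False by simp
    also have "\<dots> = nrm x / norm x" using N by (simp add: is_norm_scaleR divide_inverse_commute)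
    finally show ?thesis using False by (simp add: field_simps)
  qed (use N in \<open>simp add: is_norm_eq_0 is_norm_nonneg\<close>)
  moreover have "nrm x0 > 0" using x0 N by (auto intro: is_norm_pos)
  ultimately show thesis using that by blast
qed

lemma bdd_above_dual_norm:
  fixes nrm :: "'a::euclidean_space \<Rightarrow> real"
  assumes N: "is_norm nrm" shows "bdd_above ((\<lambda>x. g \<bullet> x) ` {x. nrm x \<le> 1})"
proof -
  obtain c where c: "c > 0" "\<And>x. c * norm x \<le> nrm x" using is_norm_lower_bound[OF N] by blast
  have "g \<bullet> x \<le> norm g / c" if "nrm x \<le> 1" for x
  proof -
    have "g \<bullet> x \<le> norm g * norm x" by (simp add: norm_cauchy_schwarz)
    also have "\<dots> \<le> norm g * (1 / c)"
      using c(1) order_trans[OF c(2) that] by (intro mult_left_mono) (simp_all add: field_simps)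
    finally show ?thesis by simp
  qed
  then show ?thesis by (auto simp: bdd_above_def)
qed

lemma inner_le_dual_norm:
  fixes nrm :: "'a::euclidean_space \<Rightarrow> real"
  assumes N: "is_norm nrm" shows "g \<bullet> u \<le> dual_norm nrm g * nrm u"
proof -
  have dual_norm_ge: "g \<bullet> w \<le> dual_norm nrm g" if "nrm w \<le> 1" for w
    unfolding dual_norm_def using that by (intro cSup_upper bdd_above_dual_norm[OF N]) auto
  show ?thesis
  proof (cases "u = 0")
    case True
    then show ?thesis using dual_norm_ge[of 0] N by (simp add: is_norm_zero)
  next
    case False
    then have "nrm u > 0" using N by (simp add: is_norm_pos)
    moreover have "g \<bullet> (u /\<^sub>R nrm u) \<le> dual_norm nrm g"
      using \<open>nrm u > 0\<close> N by (intro dual_norm_ge) (simp add: is_norm_scaleR)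
    ultimately show ?thesis by (simp add: field_simps)
  qed
qed

lemma abs_inner_le_dual_norm:
  fixes nrm :: "'a::euclidean_space \<Rightarrow> real"
  assumes N: "is_norm nrm" shows "\<bar>g \<bullet> u\<bar> \<le> dual_norm nrm g * nrm u"
  using inner_le_dual_norm[OF N, of g u] inner_le_dual_norm[OF N, of g "- u"]
    is_norm_minus_commute[OF N, of 0 u] by simp

lemma dual_norm_pos:
  fixes nrm :: "'a::euclidean_space \<Rightarrow> real"
  assumes N: "is_norm nrm" and "g \<noteq> 0" shows "0 < dual_norm nrm g"
proof -
  have "0 < g \<bullet> g" using \<open>g \<noteq> 0\<close> by simp
  also have "\<dots> \<le> dual_norm nrm g * nrm g" using N by (rule inner_le_dual_norm)
  finally show ?thesis using is_norm_nonneg[OF N, of g] by (simp add: zero_less_mult_iff)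
qed

section \<open>Strong convexity and the Bregman divergence\<close>

lemma strongly_convex_1_add_affine:
  assumes "strongly_convex_1 nrm d" shows "strongly_convex_1 nrm (\<lambda>z. d z + c + w \<bullet> z)"
  unfolding strongly_convex_1_def
proof (intro allI impI)
  fix x y and t :: real assume "0 \<le> t \<and> t \<le> 1"
  then have "d ((1 - t) *\<^sub>R x + t *\<^sub>R y) \<le> (1 - t) * d x + t * d y - t * (1 - t) / 2 * (nrm (x - y))\<^sup>2"
    using assms unfolding strongly_convex_1_def by blast
  moreover have "w \<bullet> ((1 - t) *\<^sub>R x + t *\<^sub>R y) = (1 - t) * (w \<bullet> x) + t * (w \<bullet> y)"
    by (simp add: inner_add_right)
  ultimately show "d ((1 - t) *\<^sub>R x + t *\<^sub>R y) + c + w \<bullet> ((1 - t) *\<^sub>R x + t *\<^sub>R y)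
    \<le> (1 - t) * (d x + c + w \<bullet> x) + t * (d y + c + w \<bullet> y) - t * (1 - t) / 2 * (nrm (x - y))\<^sup>2"
    by (simp add: algebra_simps)
qed

lemma strongly_convex_1_min:
  fixes \<phi> :: "'a::real_inner \<Rightarrow> real"
  assumes sc: "strongly_convex_1 nrm \<phi>" and min: "\<And>z. \<phi> v \<le> \<phi> z"
  shows "\<phi> v + (nrm (z - v))\<^sup>2 / 2 \<le> \<phi> z"
proof -
  let ?n = "(nrm (z - v))\<^sup>2"
  have "t * (?n / 2) \<le> \<phi> z - \<phi> v" if t: "0 < t" "t < 1" for t
  proof -
    have "\<phi> v \<le> \<phi> ((1 - t) *\<^sub>R z + t *\<^sub>R v)" by (rule min)
    also have "\<dots> \<le> (1 - t) * \<phi> z + t * \<phi> v - t * (1 - t) / 2 * ?n"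
      using sc t unfolding strongly_convex_1_def by auto
    finally have "0 \<le> (1 - t) * (\<phi> z - \<phi> v - t * (?n / 2))"
      by (simp add: algebra_simps)
    then show ?thesis using t by (simp add: zero_le_mult_iff)
  qed
  then have "?n / 2 \<le> \<phi> z - \<phi> v" by (rule field_le_mult_one_interval)
  then show ?thesis by simp
qed

lemma has_real_derivative_on_line:
  assumes "(f has_derivative (\<lambda>h. g \<bullet> h)) (at (p + t *\<^sub>R u))"
  shows "((\<lambda>s. f (p + s *\<^sub>R u)) has_real_derivative g \<bullet> u) (at t)"
proof -
  have "((\<lambda>s. p + s *\<^sub>R u) has_derivative (\<lambda>s. s *\<^sub>R u)) (at t)"
    by (auto intro!: derivative_eq_intros)
  then have "((\<lambda>s. f (p + s *\<^sub>R u)) has_derivative (\<lambda>s. g \<bullet> (s *\<^sub>R u))) (at t)"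
    using assms by (rule has_derivative_compose[unfolded o_def])
  moreover have "(\<lambda>s. g \<bullet> (s *\<^sub>R u)) = (*) (g \<bullet> u)"
    by auto
  ultimately show ?thesis by (simp add: has_field_derivative_def)
qed

lemma convex_on_above_tangent:
  fixes d :: "'a::real_inner \<Rightarrow> real"
  assumes cvx: "convex_on UNIV d" and deriv: "(d has_derivative (\<lambda>h. g \<bullet> h)) (at z)"
  shows "d z + g \<bullet> (x - z) \<le> d x"
proof -
  define \<phi> where "\<phi> t = d (z + t *\<^sub>R (x - z))" for t
  have "convex_on UNIV \<phi>"
  proof (rule convex_onI)
    fix t s r :: real
    have "z + ((1 - t) * s + t * r) *\<^sub>R (x - z) = (1 - t) *\<^sub>R (z + s *\<^sub>R (x - z)) + t *\<^sub>R (z + r *\<^sub>R (x - z))"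
      by (simp add: algebra_simps)
    moreover assume "0 < t" "t < 1"
    ultimately show "\<phi> ((1 - t) *\<^sub>R s + t *\<^sub>R r) \<le> (1 - t) * \<phi> s + t * \<phi> r"
      unfolding \<phi>_def using convex_onD[OF cvx, of t] by simp
  qed auto
  moreover have "(\<phi> has_field_derivative g \<bullet> (x - z)) (at 0)"
    unfolding \<phi>_def using deriv by (intro has_real_derivative_on_line) simp
  ultimately have "\<phi> 1 - \<phi> 0 \<ge> g \<bullet> (x - z) * (1 - 0)"
    by (intro convex_on_imp_above_tangent) auto
  then show ?thesis unfolding \<phi>_def by simp
qed

lemma bregman_ge:
  fixes d :: "'a::euclidean_space \<Rightarrow> real"
  assumes prox: "prox_function nrm d gd"
  shows "(nrm (x - z))\<^sup>2 / 2 \<le> bregman d gd x z"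
proof -
  have eq: "bregman d gd w z = d w + (gd z \<bullet> z - d z) + (- gd z) \<bullet> w" for w
    unfolding bregman_def by (simp add: inner_diff_right)
  have "strongly_convex_1 nrm (\<lambda>w. bregman d gd w z)"
    unfolding eq using prox by (intro strongly_convex_1_add_affine) (simp add: prox_function_def)
  moreover have "bregman d gd z z \<le> bregman d gd w z" for w
    using convex_on_above_tangent[of d "gd z" z w] prox by (simp add: prox_function_def bregman_def)
  ultimately have "bregman d gd z z + (nrm (x - z))\<^sup>2 / 2 \<le> bregman d gd x z"
    by (rule strongly_convex_1_min)
  then show ?thesis by (simp add: bregman_def prox_function_def)
qed

section \<open>The Hoelder descent lemma\<close>

lemma holder_M_nonneg:
  assumes "holder_consts nrm gf \<nu> \<noteq> {}" shows "0 \<le> holder_M nrm gf \<nu>"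
  unfolding holder_M_def using assms by (intro cInf_greatest) (auto simp: holder_consts_def)

lemma holder_M_bound:
  assumes ne: "holder_consts nrm gf \<nu> \<noteq> {}"
  shows "dual_norm nrm (gf p - gf q) \<le> holder_M nrm gf \<nu> * nrm (p - q) powr \<nu>"
proof (cases "nrm (p - q) powr \<nu> = 0")
  case True
  obtain M where "M \<in> holder_consts nrm gf \<nu>" using ne by blast
  then have "dual_norm nrm (gf p - gf q) \<le> M * nrm (p - q) powr \<nu>" by (simp add: holder_consts_def)
  then show ?thesis using True by simp
next
  case False
  then have R: "nrm (p - q) powr \<nu> > 0" by (simp add: order_le_less)
  have "dual_norm nrm (gf p - gf q) / nrm (p - q) powr \<nu> \<le> holder_M nrm gf \<nu>"
    unfolding holder_M_def using R
    by (intro cInf_greatest[OF ne]) (auto simp: holder_consts_def pos_divide_le_eq)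
  then show ?thesis using R by (simp add: pos_divide_le_eq)
qed

lemma has_real_derivative_of_subgradient:
  fixes \<phi> \<sigma> :: "real \<Rightarrow> real"
  assumes sub: "\<And>s w. \<phi> s + \<sigma> s * (w - s) \<le> \<phi> w" and cont: "isCont \<sigma> t"
  shows "(\<phi> has_real_derivative \<sigma> t) (at t)"
  unfolding has_field_derivative_iff
proof (rule tendsto_sandwich[where f = "\<lambda>s. min (\<sigma> t) (\<sigma> s)" and h = "\<lambda>s. max (\<sigma> t) (\<sigma> s)"])
  have slope: "min (\<sigma> t) (\<sigma> s) \<le> (\<phi> s - \<phi> t) / (s - t) \<and> (\<phi> s - \<phi> t) / (s - t) \<le> max (\<sigma> t) (\<sigma> s)"
    if "s \<noteq> t" for s
  proof -
    have ineqs: "\<sigma> t * (s - t) \<le> \<phi> s - \<phi> t" "\<phi> s - \<phi> t \<le> \<sigma> s * (s - t)"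
      using sub[of t s] sub[of s t] by (simp_all add: algebra_simps)
    then have "\<sigma> t \<le> (\<phi> s - \<phi> t) / (s - t) \<and> (\<phi> s - \<phi> t) / (s - t) \<le> \<sigma> s
      \<or> \<sigma> s \<le> (\<phi> s - \<phi> t) / (s - t) \<and> (\<phi> s - \<phi> t) / (s - t) \<le> \<sigma> t"
    proof (cases "s > t")
      case False
      then have "s - t < 0" using that by simp
      with ineqs show ?thesis by (simp add: neg_le_divide_eq neg_divide_le_eq)
    qed (simp add: pos_le_divide_eq pos_divide_le_eq)
    then show ?thesis by (auto simp: min_le_iff_disj le_max_iff_disj)
  qed
  then show "\<forall>\<^sub>F s in at t. min (\<sigma> t) (\<sigma> s) \<le> (\<phi> s - \<phi> t) / (s - t)"
    and "\<forall>\<^sub>F s in at t. (\<phi> s - \<phi> t) / (s - t) \<le> max (\<sigma> t) (\<sigma> s)"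
    by (auto simp: eventually_at_filter)
  have "\<sigma> \<midarrow>t\<rightarrow> \<sigma> t" using cont by (simp add: isCont_def)
  then show "((\<lambda>s. min (\<sigma> t) (\<sigma> s)) \<longlongrightarrow> \<sigma> t) (at t)" "((\<lambda>s. max (\<sigma> t) (\<sigma> s)) \<longlongrightarrow> \<sigma> t) (at t)"
    using tendsto_min[of "\<lambda>_. \<sigma> t" "\<sigma> t" "at t" \<sigma> "\<sigma> t"] tendsto_max[of "\<lambda>_. \<sigma> t" "\<sigma> t" "at t" \<sigma> "\<sigma> t"]
    by auto
qed

lemma holder_inner_increment:
  fixes nrm :: "'a::euclidean_space \<Rightarrow> real"
  assumes N: "is_norm nrm" and H: "\<And>p q. dual_norm nrm (gf p - gf q) \<le> M * nrm (p - q) powr \<nu>"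
  shows "\<bar>gf (p + s *\<^sub>R u) \<bullet> u - gf (p + t *\<^sub>R u) \<bullet> u\<bar> \<le> M * \<bar>s - t\<bar> powr \<nu> * nrm u powr (1 + \<nu>)"
proof -
  have "\<bar>gf (p + s *\<^sub>R u) \<bullet> u - gf (p + t *\<^sub>R u) \<bullet> u\<bar> = \<bar>(gf (p + s *\<^sub>R u) - gf (p + t *\<^sub>R u)) \<bullet> u\<bar>"
    by (simp add: inner_diff_left)
  also have "\<dots> \<le> dual_norm nrm (gf (p + s *\<^sub>R u) - gf (p + t *\<^sub>R u)) * nrm u"
    using N by (rule abs_inner_le_dual_norm)
  also have "\<dots> \<le> M * nrm ((s - t) *\<^sub>R u) powr \<nu> * nrm u"
  proof (rule mult_right_mono)
    have "(p + s *\<^sub>R u) - (p + t *\<^sub>R u) = (s - t) *\<^sub>R u" by (simp add: scaleR_diff_left)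
    then show "dual_norm nrm (gf (p + s *\<^sub>R u) - gf (p + t *\<^sub>R u)) \<le> M * nrm ((s - t) *\<^sub>R u) powr \<nu>"
      using H[of "p + s *\<^sub>R u" "p + t *\<^sub>R u"] by simp
  qed (rule is_norm_nonneg[OF N])
  also have "\<dots> = M * \<bar>s - t\<bar> powr \<nu> * nrm u powr (1 + \<nu>)"
    using is_norm_nonneg[OF N, of u] by (simp add: is_norm_scaleR[OF N] powr_mult powr_add)
  finally show ?thesis .
qed

lemma holder_isCont_on_line:
  fixes nrm :: "'a::euclidean_space \<Rightarrow> real"
  assumes N: "is_norm nrm" and H: "\<And>p q. dual_norm nrm (gf p - gf q) \<le> M * nrm (p - q) powr \<nu>"
    and "0 < \<nu>"
  shows "isCont (\<lambda>s. gf (p + s *\<^sub>R u) \<bullet> u) t"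
proof -
  have "((\<lambda>s. \<bar>s - t\<bar> powr \<nu>) \<longlongrightarrow> 0) (at t)"
    using \<open>0 < \<nu>\<close> by (intro tendsto_zero_powrI) (auto intro!: tendsto_eq_intros)
  then have "((\<lambda>s. M * \<bar>s - t\<bar> powr \<nu> * nrm u powr (1 + \<nu>)) \<longlongrightarrow> 0) (at t)"
    by (intro tendsto_mult_left_zero tendsto_mult_right_zero)
  then have "((\<lambda>s. gf (p + s *\<^sub>R u) \<bullet> u - gf (p + t *\<^sub>R u) \<bullet> u) \<longlongrightarrow> 0) (at t)"
    by (rule Lim_null_comparison[rotated]) (use holder_inner_increment[OF N H] in auto)
  then show ?thesis unfolding isCont_def by (simp add: LIM_zero_iff)
qed

text \<open>Mean value theorem applied to
  \<open>\<phi> t - t \<sigma>(0) - K t\<^bsup>1+\<nu>\<^esup>/(1+\<nu>)\<close>, whose derivative is nonpositive on \<open>(0,1)\<close>.\<close>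
lemma descent_of_holder_derivative:
  fixes \<phi> \<sigma> :: "real \<Rightarrow> real"
  assumes deriv: "\<And>t. (\<phi> has_real_derivative \<sigma> t) (at t)"
    and incr: "\<And>s. 0 < s \<Longrightarrow> s < 1 \<Longrightarrow> \<sigma> s - \<sigma> 0 \<le> K * s powr \<nu>" and nu: "0 \<le> \<nu>"
  shows "\<phi> 1 \<le> \<phi> 0 + \<sigma> 0 + K / (1 + \<nu>)"
proof -
  define \<psi> where "\<psi> t = \<phi> t - t * \<sigma> 0 - K / (1 + \<nu>) * t powr (1 + \<nu>)" for t
  have d\<psi>: "(\<psi> has_real_derivative \<sigma> t - \<sigma> 0 - K * t powr \<nu>) (at t)" if "0 < t" for t
  proof -
    have "((\<lambda>t. t powr (1 + \<nu>)) has_real_derivative (1 + \<nu>) * t powr \<nu>) (at t)"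
      using has_real_derivative_powr[OF that, of "1 + \<nu>"] by simp
    then show ?thesis unfolding \<psi>_def
      using nu that by (auto intro!: derivative_eq_intros deriv)
  qed
  have "continuous_on {0..1} \<phi>"
    using deriv by (meson DERIV_isCont continuous_at_imp_continuous_on)
  moreover have "continuous_on {0..1::real} (\<lambda>t. t powr (1 + \<nu>))"
    by (rule continuous_on_powr') (use nu in auto)
  ultimately have "continuous_on {0..1} \<psi>"
    unfolding \<psi>_def by (intro continuous_on_diff continuous_on_mult continuous_on_const continuous_on_id)
  then obtain l z where z: "0 < z" "z < 1" and "(\<psi> has_real_derivative l) (at z)" "\<psi> 1 - \<psi> 0 = l"
    using MVT[of 0 1 \<psi>] d\<psi> by (auto simp: real_differentiable_def)
  then have "\<psi> 1 - \<psi> 0 = \<sigma> z - \<sigma> 0 - K * z powr \<nu>"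
    using DERIV_unique d\<psi>[OF z(1)] by blast
  then have "\<psi> 1 \<le> \<psi> 0" using incr[OF z] by simp
  then show ?thesis unfolding \<psi>_def by simp
qed

lemma holder_descent:
  fixes nrm :: "'a::euclidean_space \<Rightarrow> real"
  assumes N: "is_norm nrm" and nu: "0 \<le> \<nu>"
    and H: "\<And>p q. dual_norm nrm (gf p - gf q) \<le> M * nrm (p - q) powr \<nu>"
    and fclass: "(\<forall>p z. f p + gf p \<bullet> (z - p) \<le> f z) \<or> (\<forall>p. (f has_derivative (\<lambda>u. gf p \<bullet> u)) (at p))"
  shows "f (p + u) \<le> f p + gf p \<bullet> u + M / (1 + \<nu>) * nrm u powr (1 + \<nu>)"
proof -
  define \<phi> where "\<phi> s = f (p + s *\<^sub>R u)" for s
  define \<sigma> where "\<sigma> s = gf (p + s *\<^sub>R u) \<bullet> u" for s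
  have incr: "\<sigma> s - \<sigma> 0 \<le> M * nrm u powr (1 + \<nu>) * s powr \<nu>" if "0 \<le> s" for s
    using holder_inner_increment[OF N H, of p s u 0] that unfolding \<sigma>_def by (simp add: mult_ac)
  consider (subgradient_0) "\<nu> = 0" "\<forall>p z. f p + gf p \<bullet> (z - p) \<le> f z"
    | (differentiable) "\<And>t. (\<phi> has_real_derivative \<sigma> t) (at t)"
  proof (cases "\<forall>p z. f p + gf p \<bullet> (z - p) \<le> f z")
    case sub: True
    show thesis
    proof (cases "\<nu> = 0")
      case False
      have "(\<phi> has_real_derivative \<sigma> t) (at t)" for t
      proof (rule has_real_derivative_of_subgradient)
        show "\<phi> s + \<sigma> s * (w - s) \<le> \<phi> w" for s w
          using sub[rule_format, of "p + s *\<^sub>R u" "p + w *\<^sub>R u"]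
          unfolding \<phi>_def \<sigma>_def by (simp add: algebra_simps)
        show "isCont \<sigma> t"
          unfolding \<sigma>_def using N H nu False by (intro holder_isCont_on_line) auto
      qed
      then show thesis by (rule that(2))
    qed (use sub that(1) in blast)
  next
    case False
    with fclass have "(f has_derivative (\<lambda>h. gf q \<bullet> h)) (at q)" for q by blast
    then have "(\<phi> has_real_derivative \<sigma> t) (at t)" for t
      unfolding \<phi>_def \<sigma>_def by (rule has_real_derivative_on_line)
    then show thesis by (rule that(2))
  qed
  then have "\<phi> 1 \<le> \<phi> 0 + \<sigma> 0 + M * nrm u powr (1 + \<nu>) / (1 + \<nu>)"
  proof cases
    case subgradient_0
    then have "\<phi> 1 \<le> \<phi> 0 + \<sigma> 1"
      using subgradient_0(2)[rule_format, of "p + u" p] unfolding \<phi>_def \<sigma>_def by (simp add: inner_diff_right)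
    then show ?thesis using incr[of 1] subgradient_0(1) by simp
  next
    case differentiable
    show ?thesis by (rule descent_of_holder_derivative[OF differentiable _ nu]) (simp add: incr)
  qed
  then show ?thesis unfolding \<phi>_def \<sigma>_def by simp
qed

section \<open>Scalar inequalities\<close>

text \<open>With \<open>c = f(y\<^sub>k) - f(x\<^sub>k\<^sub>+\<^sub>1)\<close> and \<open>G = \<parallel>\<nabla>f(y\<^sub>k)\<parallel>\<^sub>*\<^sup>2\<close> the equation defining \<open>a\<^sub>k\<^sub>+\<^sub>1\<close> reads
  \<open>G b\<^sup>2 - (\<epsilon> + 2c) b - 2 A c = 0\<close>; its larger root is positive.\<close>
lemma largest_root_pos:
  fixes A a c G \<epsilon> fy fx :: real
  assumes A: "0 \<le> A" and eps: "0 < \<epsilon>" and c: "c = fy - fx" "0 \<le> c" and G: "0 < G"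
    and largest: "\<And>b. A + b \<noteq> 0 \<Longrightarrow> fy - b\<^sup>2 / (2 * (A + b)) * G + \<epsilon> * b / (2 * (A + b)) = fx \<Longrightarrow> b \<le> a"
  shows "0 < a"
proof -
  define p where "p = \<epsilon> + 2 * c"
  define s where "s = sqrt (p\<^sup>2 + 8 * A * c * G)"
  define b where "b = (p + s) / (2 * G)"
  have p: "p > 0" using eps c unfolding p_def by simp
  have "0 \<le> 8 * A * c * G" using A c(2) G by simp
  then have s2: "s\<^sup>2 = p\<^sup>2 + 8 * A * c * G" and s0: "0 \<le> s"
    unfolding s_def by simp_all
  have b0: "b > 0" unfolding b_def using p s0 G by simp
  have hb: "2 * G * b = p + s" unfolding b_def using G by simp
  have "4 * G * (G * b\<^sup>2 - p * b) = (2 * G * b)\<^sup>2 - 2 * p * (2 * G * b)"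
    by (simp add: power2_eq_square algebra_simps)
  also have "\<dots> = 4 * G * (2 * A * c)"
    unfolding hb using s2 by (simp add: power2_eq_square algebra_simps)
  finally have "G * b\<^sup>2 - p * b = 2 * A * c" using G by simp
  then have "b\<^sup>2 * G - \<epsilon> * b = 2 * (A + b) * c"
    unfolding p_def by (simp add: algebra_simps)
  moreover have Ab: "A + b > 0" using A b0 by simp
  ultimately have "b\<^sup>2 / (2 * (A + b)) * G - \<epsilon> * b / (2 * (A + b)) = c"
    by (simp add: diff_divide_distrib[symmetric])
  then have "fy - b\<^sup>2 / (2 * (A + b)) * G + \<epsilon> * b / (2 * (A + b)) = fx"
    using c(1) by simp
  then have "b \<le> a" using largest Ab by simp
  then show ?thesis using b0 by simp
qed

text \<open>One step of the estimate-sequence induction: \<open>n\<close> is the distance between consecutive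
  minimisers of the estimate functions, \<open>g\<close> the linearisation term at the new minimiser, and the
  square \<open>(n - a r)\<^sup>2 \<ge> 0\<close> absorbs the loss \<open>a\<^sup>2 r\<^sup>2 / 2\<close>.\<close>
lemma estimate_sequence_step:
  fixes A a r n \<psi> \<psi>' fx fy fx' \<epsilon> g :: real
  assumes A: "0 \<le> A" and a: "0 < a"
    and \<psi>: "\<psi> + n\<^sup>2 / 2 \<le> \<psi>'" and g: "- (r * n) \<le> g"
    and IH: "A * fx - A * \<epsilon> / 2 \<le> \<psi>" and fy: "fy \<le> fx"
    and eq: "fy - a\<^sup>2 / (2 * (A + a)) * r\<^sup>2 + \<epsilon> * a / (2 * (A + a)) = fx'"
  shows "(A + a) * fx' - (A + a) * \<epsilon> / 2 \<le> \<psi>' + a * (fy + g)"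
proof -
  have Aa: "A + a > 0" using A a by simp
  have "(A + a) * (a\<^sup>2 / (2 * (A + a)) * r\<^sup>2) = a\<^sup>2 * r\<^sup>2 / 2"
    and "(A + a) * (\<epsilon> * a / (2 * (A + a))) = \<epsilon> * a / 2"
    using Aa by (simp_all add: field_simps)
  moreover have "(A + a) * fx' = (A + a) * fy - (A + a) * (a\<^sup>2 / (2 * (A + a)) * r\<^sup>2)
      + (A + a) * (\<epsilon> * a / (2 * (A + a)))"
    using eq[symmetric] by (simp add: right_diff_distrib distrib_left)
  ultimately have "(A + a) * fx' = (A + a) * fy - a\<^sup>2 * r\<^sup>2 / 2 + \<epsilon> * a / 2"
    by linarith
  moreover have "- (a\<^sup>2 * r\<^sup>2 / 2) \<le> n\<^sup>2 / 2 - a * (r * n)"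
    using zero_le_power2[of "n - a * r"] by (simp add: power2_eq_square algebra_simps)
  moreover have "A * fy \<le> A * fx" using A fy by (simp add: mult_left_mono)
  moreover have "- (a * (r * n)) \<le> a * g"
    using mult_left_mono[OF g] a by simp
  moreover have "(A + a) * fy = A * fy + a * fy" "(A + a) * \<epsilon> / 2 = A * \<epsilon> / 2 + \<epsilon> * a / 2"
    "a * (fy + g) = a * fy + a * g"
    by (simp_all add: algebra_simps)
  ultimately show ?thesis using IH \<psi> by linarith
qed

definition young_constant :: "real \<Rightarrow> real \<Rightarrow> real \<Rightarrow> real" where
  "young_constant \<nu> M \<delta> = exp ((2 * ln M + (1 - \<nu>) * (ln ((1 - \<nu>) / (1 + \<nu>)) - ln \<delta>)) / (1 + \<nu>))"

text \<open>\<open>young_constant \<nu> M \<delta> = M\<^bsup>2/(1+\<nu>)\<^esup> ((1-\<nu>)/((1+\<nu>)\<delta>))\<^bsup>(1-\<nu>)/(1+\<nu>)\<^esup>\<close>, the smoothness constant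
  of the inexact quadratic upper model of a Hoelder-smooth function; the logarithmic form makes
  the case \<open>\<nu> = 1\<close>, where it is \<open>M\<close>, need no separate definition. The bound is weighted AM-GM
  with weights \<open>p = (1+\<nu>)/2\<close> and \<open>1 - p\<close> applied to \<open>L t\<^sup>2/p\<close> and \<open>\<delta>/(1-p)\<close>.\<close>
lemma young_holder_strict:
  fixes \<nu> M \<delta> t :: real
  assumes nu: "0 \<le> \<nu>" "\<nu> < 1" and M: "0 < M" and \<delta>: "0 < \<delta>" and t0: "0 < t"
  shows "M / (1 + \<nu>) * t powr (1 + \<nu>) \<le> young_constant \<nu> M \<delta> / 2 * t\<^sup>2 + \<delta> / 2"
proof -
  define p where "p = (1 + \<nu>) / 2"
  define L where "L = young_constant \<nu> M \<delta>"
  define X where "X = L * t\<^sup>2 / p"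
  define Y where "Y = \<delta> / (1 - p)"
  have p: "0 < p" "p < 1" using nu unfolding p_def by auto
  have X: "X > 0" and Y: "Y > 0" unfolding X_def Y_def L_def young_constant_def using t0 p \<delta> by auto
  define lc where "lc = ln ((1 - \<nu>) / (1 + \<nu>))"
  have "(1 - \<nu>) / (1 + \<nu>) = (1 - p) / p" unfolding p_def using nu by (simp add: field_simps)
  then have lc: "lc = ln (1 - p) - ln p" unfolding lc_def using p by (simp add: ln_div)
  have "p * ln L = ln M + (1 - p) * (lc - ln \<delta>)"
    unfolding L_def young_constant_def lc_def[symmetric] p_def using nu by (simp add: field_simps)
  then have lnL: "p * ln L = ln M + (1 - p) * (ln (1 - p) - ln p - ln \<delta>)"
    unfolding lc by simp
  have lnX: "ln X = ln L + 2 * ln t - ln p" and lnY: "ln Y = ln \<delta> - ln (1 - p)"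
    unfolding X_def Y_def L_def young_constant_def using t0 p \<delta> by (simp_all add: ln_mult ln_div ln_realpow)
  have "p * ln X + (1 - p) * ln Y = p * ln L + 2 * p * ln t - p * ln p + (1 - p) * (ln \<delta> - ln (1 - p))"
    unfolding lnX lnY by (simp add: algebra_simps)
  also have "\<dots> = ln M - ln p + 2 * p * ln t"
    unfolding lnL by (simp add: algebra_simps)
  also have "2 * p = 1 + \<nu>" unfolding p_def by simp
  finally have "p * ln X + (1 - p) * ln Y = ln M - ln p + (1 + \<nu>) * ln t" .
  have "X powr p * Y powr (1 - p) = exp (p * ln X + (1 - p) * ln Y)"
    using X Y by (simp add: powr_def exp_add)
  also note \<open>p * ln X + (1 - p) * ln Y = ln M - ln p + (1 + \<nu>) * ln t\<close>
  also have "exp (ln M - ln p + (1 + \<nu>) * ln t) = M / p * t powr (1 + \<nu>)"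
    using M p t0 by (simp add: exp_diff exp_add powr_def mult.commute)
  finally have "X powr p * Y powr (1 - p) = M / p * t powr (1 + \<nu>)" .
  moreover have "X powr p * Y powr (1 - p) \<le> p * X + (1 - p) * Y"
    using p X Y by (intro Youngs_inequality_0) auto
  moreover have "p * X + (1 - p) * Y = L * t\<^sup>2 + \<delta>"
    unfolding X_def Y_def using p by simp
  ultimately have "M / p * t powr (1 + \<nu>) \<le> L * t\<^sup>2 + \<delta>" by simp
  then show ?thesis unfolding p_def L_def by (simp add: field_simps)
qed

lemma young_holder:
  fixes \<nu> M \<delta> t :: real
  assumes nu: "0 \<le> \<nu>" "\<nu> \<le> 1" and M: "0 < M" and \<delta>: "0 < \<delta>" and t: "0 \<le> t"
  shows "M / (1 + \<nu>) * t powr (1 + \<nu>) \<le> young_constant \<nu> M \<delta> / 2 * t\<^sup>2 + \<delta> / 2"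
proof -
  consider "\<nu> = 1" | "t = 0" | "\<nu> < 1" "0 < t" using nu t by linarith
  then show ?thesis
  proof cases
    case 1
    moreover have "exp (2 * ln M / 2) = M" using M by simp
    ultimately show ?thesis using \<delta> t
      by (cases "t = 0") (simp_all add: young_constant_def powr_realpow)
  next
    case 3
    then show ?thesis using young_holder_strict[OF nu(1) _ M \<delta>] by blast
  qed (use \<delta> in simp)
qed

lemma one_minus_powr_le:
  fixes \<tau> q :: real
  assumes "0 \<le> \<tau>" "\<tau> \<le> 1" "0 \<le> q" "q \<le> 1"
  shows "(1 - \<tau>) powr q \<le> 1 - q * \<tau>"
proof (cases "\<tau> = 1")
  case False
  then have "(1 - \<tau>) powr q * 1 powr (1 - q) \<le> q * (1 - \<tau>) + (1 - q) * 1"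
    using assms by (intro Youngs_inequality_0) auto
  then show ?thesis by (simp add: algebra_simps)
qed (use assms in simp)

text \<open>\<open>uagm_rate \<nu> M \<epsilon> = (\<epsilon> / c)\<^bsup>(1-\<nu>)/(1+3\<nu>)\<^esup> / M\<^bsup>2/(1+3\<nu>)\<^esup>\<close> with \<open>c = (1-\<nu>)/(1+\<nu>)\<close>: the
  weights satisfy \<open>A\<^sub>k\<^sub>+\<^sub>1\<^bsup>q\<^esup> \<ge> A\<^sub>k\<^bsup>q\<^esup> + q uagm_rate \<nu> M \<epsilon>\<close> for \<open>q = (1+\<nu>)/(1+3\<nu>)\<close>.\<close>
definition uagm_rate :: "real \<Rightarrow> real \<Rightarrow> real \<Rightarrow> real" where
  "uagm_rate \<nu> M \<epsilon> = exp (((1 - \<nu>) * (ln \<epsilon> - ln ((1 - \<nu>) / (1 + \<nu>))) - 2 * ln M) / (1 + 3 * \<nu>))"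

text \<open>Instantiate the hypothesis at \<open>t = r / young_constant \<nu> M (\<epsilon> \<tau>)\<close> and bound the power term
  by \<open>young_holder\<close>.\<close>
lemma inverse_young_constant_le:
  fixes \<nu> M \<epsilon> \<tau> B r :: real
  assumes nu: "0 \<le> \<nu>" "\<nu> \<le> 1" and M: "0 < M" and eps: "0 < \<epsilon>" and \<tau>: "0 < \<tau>" and r: "0 < r"
    and step: "\<And>t. 0 \<le> t \<Longrightarrow> t * r - M / (1 + \<nu>) * t powr (1 + \<nu>) \<le> \<tau> * (\<tau> * B) * r\<^sup>2 / 2 - \<epsilon> * \<tau> / 2"
  shows "1 / young_constant \<nu> M (\<epsilon> * \<tau>) \<le> \<tau>\<^sup>2 * B"
proof -
  define L where "L = young_constant \<nu> M (\<epsilon> * \<tau>)"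
  define t where "t = r / L"
  have L: "0 < L" unfolding L_def young_constant_def by simp
  have t: "0 \<le> t" unfolding t_def using r L by simp
  have "t * r - (L / 2 * t\<^sup>2 + \<epsilon> * \<tau> / 2) \<le> \<tau> * (\<tau> * B) * r\<^sup>2 / 2 - \<epsilon> * \<tau> / 2"
    using step[OF t] young_holder[OF nu M _ t, of "\<epsilon> * \<tau>"] eps \<tau> unfolding L_def by simp
  moreover have "t * r - L / 2 * t\<^sup>2 = r\<^sup>2 / (2 * L)"
    unfolding t_def using L by (simp add: power2_eq_square field_simps)
  ultimately have "r\<^sup>2 / (2 * L) \<le> \<tau> * (\<tau> * B) * r\<^sup>2 / 2"
    by linarith
  then have "r\<^sup>2 * (1 / L) \<le> r\<^sup>2 * (\<tau>\<^sup>2 * B)"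
    by (simp add: power2_eq_square mult_ac)
  then show ?thesis unfolding L_def[symmetric]
    by (rule mult_left_le_imp_le) (use r in simp)
qed

lemma uagm_rate_le:
  fixes \<nu> M \<epsilon> \<tau> B r :: real
  assumes nu: "0 \<le> \<nu>" "\<nu> \<le> 1" and M: "0 < M" and eps: "0 < \<epsilon>"
    and \<tau>: "0 < \<tau>" and B: "0 < B" and r: "0 < r"
    and step: "\<And>t. 0 \<le> t \<Longrightarrow> t * r - M / (1 + \<nu>) * t powr (1 + \<nu>) \<le> \<tau> * (\<tau> * B) * r\<^sup>2 / 2 - \<epsilon> * \<tau> / 2"
  shows "uagm_rate \<nu> M \<epsilon> \<le> \<tau> * B powr ((1 + \<nu>) / (1 + 3 * \<nu>))"
proof -
  define L where "L = young_constant \<nu> M (\<epsilon> * \<tau>)"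
  have L: "0 < L" unfolding L_def young_constant_def by simp
  have "ln (1 / L) \<le> ln (\<tau>\<^sup>2 * B)"
    using inverse_young_constant_le[OF nu M eps \<tau> r step] L \<tau> B unfolding L_def[symmetric]
    by (subst ln_le_cancel_iff) auto
  then have "- ln L \<le> 2 * ln \<tau> + ln B"
    using L \<tau> B by (simp add: ln_div ln_mult ln_realpow)
  then have "(1 + \<nu>) * - ln L \<le> (1 + \<nu>) * (2 * ln \<tau> + ln B)"
    using nu by (intro mult_left_mono) auto
  moreover have "(1 + \<nu>) * ln L = 2 * ln M + (1 - \<nu>) * (ln ((1 - \<nu>) / (1 + \<nu>)) - ln \<epsilon> - ln \<tau>)"
    unfolding L_def young_constant_def using nu eps \<tau> by (simp add: ln_mult)
  ultimately have "(1 - \<nu>) * (ln \<epsilon> - ln ((1 - \<nu>) / (1 + \<nu>))) - 2 * ln M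
      \<le> (1 + 3 * \<nu>) * ln \<tau> + (1 + \<nu>) * ln B"
    by (simp add: algebra_simps)
  then have "((1 - \<nu>) * (ln \<epsilon> - ln ((1 - \<nu>) / (1 + \<nu>))) - 2 * ln M) / (1 + 3 * \<nu>)
      \<le> ((1 + 3 * \<nu>) * ln \<tau> + (1 + \<nu>) * ln B) / (1 + 3 * \<nu>)"
    using nu by (intro divide_right_mono) auto
  also have "\<dots> = ln (\<tau> * B powr ((1 + \<nu>) / (1 + 3 * \<nu>)))"
    using nu \<tau> B by (subst add_divide_distrib) (simp add: ln_mult ln_powr)
  finally have "ln (uagm_rate \<nu> M \<epsilon>) \<le> ln (\<tau> * B powr ((1 + \<nu>) / (1 + 3 * \<nu>)))"
    by (simp add: uagm_rate_def)
  then show ?thesis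
    using \<tau> B by (subst (asm) ln_le_cancel_iff) (auto simp: uagm_rate_def)
qed

lemma uagm_bound_mult_rate:
  fixes \<nu> M \<epsilon> \<Theta> :: real
  assumes nu: "0 \<le> \<nu>" "\<nu> \<le> 1" and M: "0 < M" and eps: "0 < \<epsilon>" and \<Theta>: "0 < \<Theta>"
  shows "uagm_bound \<nu> M \<epsilon> \<Theta> * uagm_rate \<nu> M \<epsilon> = 2 * (2 * \<Theta> / \<epsilon>) powr ((1 + \<nu>) / (1 + 3 * \<nu>))"
proof -
  define W where "W = (if \<nu> = 1 then 1 else ((1 - \<nu>) / (1 + \<nu>)) powr ((1 - \<nu>) / (1 + 3 * \<nu>)))"
  define lc where "lc = ln ((1 - \<nu>) / (1 + \<nu>))"
  have W: "0 < W" and lnW: "ln W = (1 - \<nu>) / (1 + 3 * \<nu>) * lc"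
    unfolding W_def lc_def using nu by (auto simp: ln_powr)
  have bound: "uagm_bound \<nu> M \<epsilon> \<Theta>
      = 2 powr ((2 + 4 * \<nu>) / (1 + 3 * \<nu>)) * W * (M / \<epsilon>) powr (2 / (1 + 3 * \<nu>)) * \<Theta> powr ((1 + \<nu>) / (1 + 3 * \<nu>))"
    unfolding uagm_bound_def W_def ..
  have "ln (uagm_bound \<nu> M \<epsilon> \<Theta>) + ln (uagm_rate \<nu> M \<epsilon>)
      = (2 + 4 * \<nu>) / (1 + 3 * \<nu>) * ln 2 + (1 - \<nu>) / (1 + 3 * \<nu>) * lc
        + 2 / (1 + 3 * \<nu>) * (ln M - ln \<epsilon>) + (1 + \<nu>) / (1 + 3 * \<nu>) * ln \<Theta>
        + ((1 - \<nu>) * (ln \<epsilon> - lc) - 2 * ln M) / (1 + 3 * \<nu>)"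
    unfolding bound using W M eps \<Theta> by (simp add: ln_mult ln_div ln_powr lnW uagm_rate_def lc_def)
  also have "\<dots> = ((2 + 4 * \<nu>) * ln 2 + (1 - \<nu>) * lc + 2 * (ln M - ln \<epsilon>) + (1 + \<nu>) * ln \<Theta>
      + ((1 - \<nu>) * (ln \<epsilon> - lc) - 2 * ln M)) / (1 + 3 * \<nu>)"
    by (simp only: times_divide_eq_left add_divide_distrib[symmetric])
  also have "\<dots> = ((1 + 3 * \<nu>) * ln 2 + (1 + \<nu>) * (ln 2 + ln \<Theta> - ln \<epsilon>)) / (1 + 3 * \<nu>)"
    by (rule arg_cong[where f = "\<lambda>x. x / (1 + 3 * \<nu>)"]) (simp add: algebra_simps)
  also have "\<dots> = ln 2 + (1 + \<nu>) / (1 + 3 * \<nu>) * (ln 2 + ln \<Theta> - ln \<epsilon>)"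
    by (subst add_divide_distrib) (use nu in simp)
  also have "\<dots> = ln (2 * (2 * \<Theta> / \<epsilon>) powr ((1 + \<nu>) / (1 + 3 * \<nu>)))"
    using \<Theta> eps by (simp add: ln_mult ln_div ln_powr)
  finally have "ln (uagm_bound \<nu> M \<epsilon> \<Theta>) + ln (uagm_rate \<nu> M \<epsilon>)
      = ln (2 * (2 * \<Theta> / \<epsilon>) powr ((1 + \<nu>) / (1 + 3 * \<nu>)))" .
  moreover have "0 < uagm_bound \<nu> M \<epsilon> \<Theta>" "0 < uagm_rate \<nu> M \<epsilon>"
    unfolding bound using W M eps \<Theta> by (simp_all add: uagm_rate_def)
  ultimately show ?thesis
    using \<Theta> eps by (subst ln_inj_iff[symmetric]) (simp_all add: ln_mult)
qed

section \<open>The estimate sequence\<close>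

lemma uagm_psi_affine:
  "uagm_psi d gd f gf x0 a y k z
    = d z + (gd x0 \<bullet> x0 - d x0 + (\<Sum>i<k. a (Suc i) * (f (y i) - gf (y i) \<bullet> y i)))
      + ((\<Sum>i<k. a (Suc i) *\<^sub>R gf (y i)) - gd x0) \<bullet> z"
proof -
  have "(\<Sum>i<k. a (Suc i) * (f (y i) + gf (y i) \<bullet> (z - y i)))
     = (\<Sum>i<k. a (Suc i) * (f (y i) - gf (y i) \<bullet> y i)) + (\<Sum>i<k. a (Suc i) *\<^sub>R gf (y i)) \<bullet> z"
    unfolding inner_sum_left sum.distrib[symmetric]
    by (rule sum.cong) (simp_all add: inner_diff_right algebra_simps)
  then show ?thesis
    unfolding uagm_psi_def bregman_def by (simp add: inner_diff_right inner_diff_left)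
qed

locale uagm_method =
  fixes nrm :: "'a::euclidean_space \<Rightarrow> real"
    and d :: "'a \<Rightarrow> real" and gd :: "'a \<Rightarrow> 'a"
    and sharp :: "'a \<Rightarrow> 'a"
    and f :: "'a \<Rightarrow> real" and gf :: "'a \<Rightarrow> 'a"
    and xs :: 'a and \<epsilon> :: real
    and x v y :: "nat \<Rightarrow> 'a" and \<beta> h a A :: "nat \<Rightarrow> real"
  assumes norm: "is_norm nrm"
    and prox: "prox_function nrm d gd"
    and sharp: "\<forall>g. nrm (sharp g) \<le> 1 \<and> g \<bullet> sharp g = dual_norm nrm g"
    and fclass: "(convex_on UNIV f \<and> (\<forall>p z. f z \<ge> f p + gf p \<bullet> (z - p)))
              \<or> ((\<forall>p. (f has_derivative (\<lambda>u. gf p \<bullet> u)) (at p)) \<and> continuous_on UNIV gf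
                 \<and> (\<forall>p. f p - f xs \<le> gf p \<bullet> (p - xs)))"
    and xs_min: "\<forall>z. f xs \<le> f z"
    and eps: "\<epsilon> > 0"
    and iter: "uagm_iterates nrm d gd sharp f gf \<epsilon> x v y \<beta> h a A"
    and nonzero: "\<forall>k. gf (y k) \<noteq> 0"
begin

abbreviation estimate :: "nat \<Rightarrow> 'a \<Rightarrow> real" where
  "estimate \<equiv> uagm_psi d gd f gf (x 0) a y"

lemma weakly_quasi_convex: "f p - f xs \<le> gf p \<bullet> (p - xs)"
proof (cases "\<forall>p z. f z \<ge> f p + gf p \<bullet> (z - p)")
  case True
  then have "f p + gf p \<bullet> (xs - p) \<le> f xs" by blast
  then show ?thesis by (simp add: inner_diff_right)
qed (use fclass in blast)

lemma gradient_model: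
  "(\<forall>p z. f p + gf p \<bullet> (z - p) \<le> f z) \<or> (\<forall>p. (f has_derivative (\<lambda>u. gf p \<bullet> u)) (at p))"
  using fclass by auto

lemma A_0: "A 0 = 0" and v_0: "v 0 = x 0"
  using iter by (simp_all add: uagm_iterates_def)

lemma
  shows y_line_min: "0 \<le> b \<Longrightarrow> b \<le> 1 \<Longrightarrow> f (y k) \<le> f (v k + b *\<^sub>R (x k - v k))"
    and gradient_y_toward_v: "0 \<le> gf (y k) \<bullet> (v k - y k)"
    and x_Suc: "x (Suc k) = y k - h (Suc k) *\<^sub>R sharp (gf (y k))"
    and x_line_min: "0 \<le> t \<Longrightarrow> f (x (Suc k)) \<le> f (y k - t *\<^sub>R sharp (gf (y k)))"
    and a_eq: "f (y k) - (a (Suc k))\<^sup>2 / (2 * (A k + a (Suc k))) * (dual_norm nrm (gf (y k)))\<^sup>2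
          + \<epsilon> * a (Suc k) / (2 * (A k + a (Suc k))) = f (x (Suc k))"
    and a_largest: "A k + b \<noteq> 0 \<Longrightarrow> f (y k) - b\<^sup>2 / (2 * (A k + b)) * (dual_norm nrm (gf (y k)))\<^sup>2
          + \<epsilon> * b / (2 * (A k + b)) = f (x (Suc k)) \<Longrightarrow> b \<le> a (Suc k)"
    and A_Suc: "A (Suc k) = A k + a (Suc k)"
    and v_min: "estimate k (v k) \<le> estimate k z"
  using iter[unfolded uagm_iterates_def, THEN conjunct2, THEN conjunct2, rule_format, of k] by auto

lemma f_y_le_f_x: "f (y k) \<le> f (x k)"
  using y_line_min[of 1 k] by simp

lemma f_x_Suc_le_f_y: "f (x (Suc k)) \<le> f (y k)"
  using x_line_min[of 0 k] x_Suc[of k] by simp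

lemma dual_norm_gradient_pos: "0 < dual_norm nrm (gf (y k))"
  using dual_norm_pos[OF norm] nonzero by blast

lemma a_pos_if_A_nonneg:
  assumes "0 \<le> A k" shows "0 < a (Suc k)"
proof (rule largest_root_pos[where A = "A k" and G = "(dual_norm nrm (gf (y k)))\<^sup>2"
      and fy = "f (y k)" and fx = "f (x (Suc k))" and c = "f (y k) - f (x (Suc k))"])
  show "b \<le> a (Suc k)"
    if "A k + b \<noteq> 0" "f (y k) - b\<^sup>2 / (2 * (A k + b)) * (dual_norm nrm (gf (y k)))\<^sup>2
        + \<epsilon> * b / (2 * (A k + b)) = f (x (Suc k))" for b
    using that by (rule a_largest)
qed (use assms eps f_x_Suc_le_f_y[of k] dual_norm_gradient_pos[of k] in auto)

lemma A_nonneg_a_pos: "0 \<le> A k \<and> 0 < a (Suc k)"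
proof (induction k)
  case 0
  then show ?case using A_0 a_pos_if_A_nonneg by simp
next
  case (Suc k)
  then have "0 \<le> A (Suc k)" using A_Suc[of k] by simp
  then show ?case using a_pos_if_A_nonneg by simp
qed

lemma A_nonneg: "0 \<le> A k" and a_pos: "0 < a (Suc k)" and A_Suc_pos: "0 < A (Suc k)"
  using A_nonneg_a_pos[of k] A_Suc[of k] by auto

lemma A_eq_sum: "A k = (\<Sum>i<k. a (Suc i))"
  by (induction k) (simp_all add: A_0 A_Suc)

lemma estimate_invariant: "A k * f (x k) - A k * \<epsilon> / 2 \<le> estimate k (v k)"
proof (induction k)
  case 0
  then show ?case using A_0 v_0 by (simp add: uagm_psi_def bregman_def)
next
  case (Suc k)
  let ?g = "gf (y k)"
  have "strongly_convex_1 nrm (estimate k)"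
    unfolding uagm_psi_affine using prox
    by (intro strongly_convex_1_add_affine) (simp add: prox_function_def)
  then have \<psi>: "estimate k (v k) + (nrm (v (Suc k) - v k))\<^sup>2 / 2 \<le> estimate k (v (Suc k))"
    using v_min by (rule strongly_convex_1_min)
  have "- (dual_norm nrm ?g * nrm (v (Suc k) - v k)) \<le> ?g \<bullet> (v (Suc k) - v k)"
    using abs_inner_le_dual_norm[OF norm, of ?g "v (Suc k) - v k"] by linarith
  then have lin: "- (dual_norm nrm ?g * nrm (v (Suc k) - v k)) \<le> ?g \<bullet> (v (Suc k) - y k)"
    using gradient_y_toward_v[of k] by (simp add: inner_diff_right)
  have "(A k + a (Suc k)) * f (x (Suc k)) - (A k + a (Suc k)) * \<epsilon> / 2
      \<le> estimate k (v (Suc k)) + a (Suc k) * (f (y k) + ?g \<bullet> (v (Suc k) - y k))"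
    by (rule estimate_sequence_step[OF A_nonneg a_pos \<psi> lin Suc.IH f_y_le_f_x a_eq])
  then show ?case by (simp add: A_Suc uagm_psi_def)
qed

lemma estimate_at_minimizer: "estimate k xs \<le> bregman d gd xs (x 0) + A k * f xs"
proof -
  have "(\<Sum>i<k. a (Suc i) * (f (y i) + gf (y i) \<bullet> (xs - y i))) \<le> (\<Sum>i<k. a (Suc i) * f xs)"
  proof (rule sum_mono)
    fix i
    have "f (y i) + gf (y i) \<bullet> (xs - y i) \<le> f xs"
      using weakly_quasi_convex[of "y i"] by (simp add: inner_diff_right)
    then show "a (Suc i) * (f (y i) + gf (y i) \<bullet> (xs - y i)) \<le> a (Suc i) * f xs"
      using a_pos[of i] by (simp add: mult_left_mono)
  qed
  then show ?thesis
    unfolding uagm_psi_def A_eq_sum sum_distrib_right by simp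
qed

theorem convergence_rate:
  assumes "1 \<le> k" shows "f (x k) - f xs \<le> bregman d gd xs (x 0) / A k + \<epsilon> / 2"
proof -
  have Ak: "0 < A k" using A_Suc_pos assms by (cases k) auto
  have "A k * f (x k) - A k * \<epsilon> / 2 \<le> bregman d gd xs (x 0) + A k * f xs"
    using estimate_invariant[of k] v_min[of k xs] estimate_at_minimizer[of k] by linarith
  then have "A k * (f (x k) - f xs - \<epsilon> / 2) \<le> bregman d gd xs (x 0)"
    by (simp add: algebra_simps)
  then show ?thesis using Ak by (simp add: field_simps)
qed

section \<open>Growth of the weights\<close>

lemma holder_M_pos:
  assumes ne: "holder_consts nrm gf \<nu> \<noteq> {}" shows "0 < holder_M nrm gf \<nu>"
proof (rule ccontr)
  assume "\<not> ?thesis"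
  then have M0: "holder_M nrm gf \<nu> = 0" using holder_M_nonneg[OF ne] by simp
  define g where "g = gf (y 0)"
  have const: "gf p = g" for p
  proof (rule ccontr)
    assume "gf p \<noteq> g"
    then have "0 < dual_norm nrm (gf p - gf (y 0))" unfolding g_def using dual_norm_pos[OF norm] by simp
    with holder_M_bound[OF ne, of p "y 0"] M0 show False by simp
  qed
  have "f (xs - g) - f xs \<le> - (g \<bullet> g)"
    using weakly_quasi_convex[of "xs - g"] const by simp
  moreover have "0 < g \<bullet> g" using nonzero unfolding g_def by simp
  ultimately show False using xs_min by (meson diff_ge_0_iff_ge neg_less_0_iff_less order.trans not_le)
qed

text \<open>The exact line search makes \<open>x\<^sub>k\<^sub>+\<^sub>1\<close> at least as good as every step \<open>t\<close> along
  \<open>-(\<nabla>f(y\<^sub>k))\<^sup>#\<close>, whose value the Hoelder descent lemma bounds; the right-hand side is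
  \<open>f(y\<^sub>k) - f(x\<^sub>k\<^sub>+\<^sub>1)\<close> rewritten by the equation defining \<open>a\<^sub>k\<^sub>+\<^sub>1\<close>.\<close>
lemma exact_line_search_bound:
  fixes k :: nat
  assumes nu: "0 \<le> \<nu>" and ne: "holder_consts nrm gf \<nu> \<noteq> {}" and t: "0 \<le> t"
  defines "\<tau> \<equiv> a (Suc k) / A (Suc k)"
  shows "t * dual_norm nrm (gf (y k)) - holder_M nrm gf \<nu> / (1 + \<nu>) * t powr (1 + \<nu>)
    \<le> \<tau> * (\<tau> * A (Suc k)) * (dual_norm nrm (gf (y k)))\<^sup>2 / 2 - \<epsilon> * \<tau> / 2"
proof -
  let ?M = "holder_M nrm gf \<nu>" and ?g = "gf (y k)" and ?s = "sharp (gf (y k))"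
  let ?r = "dual_norm nrm (gf (y k))"
  have "nrm (- (t *\<^sub>R ?s)) \<le> t"
    using sharp t is_norm_scaleR[OF norm, of "- t" ?s] by (simp add: mult_left_le)
  then have "nrm (- (t *\<^sub>R ?s)) powr (1 + \<nu>) \<le> t powr (1 + \<nu>)"
    using nu is_norm_nonneg[OF norm] by (intro powr_mono2) auto
  then have model: "?M / (1 + \<nu>) * nrm (- (t *\<^sub>R ?s)) powr (1 + \<nu>) \<le> ?M / (1 + \<nu>) * t powr (1 + \<nu>)"
    using holder_M_nonneg[OF ne] nu by (intro mult_left_mono) auto
  have "f (x (Suc k)) \<le> f (y k + - (t *\<^sub>R ?s))" using x_line_min[OF t] by simp
  also have "\<dots> \<le> f (y k) + ?g \<bullet> - (t *\<^sub>R ?s) + ?M / (1 + \<nu>) * nrm (- (t *\<^sub>R ?s)) powr (1 + \<nu>)"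
    using norm nu holder_M_bound[OF ne] gradient_model by (rule holder_descent)
  also have "?g \<bullet> - (t *\<^sub>R ?s) = - t * ?r" using sharp by simp
  finally have "f (x (Suc k)) \<le> f (y k) - t * ?r + ?M / (1 + \<nu>) * t powr (1 + \<nu>)"
    using model by simp
  moreover have "(a (Suc k))\<^sup>2 / (2 * (A k + a (Suc k))) * ?r\<^sup>2 = \<tau> * (\<tau> * A (Suc k)) * ?r\<^sup>2 / 2"
    and "\<epsilon> * a (Suc k) / (2 * (A k + a (Suc k))) = \<epsilon> * \<tau> / 2"
    using A_Suc_pos[of k] unfolding \<tau>_def A_Suc[symmetric] by (simp_all add: power2_eq_square)
  ultimately show ?thesis using a_eq[of k] by linarith
qed

lemma A_powr_growth:
  assumes nu: "0 \<le> \<nu>" "\<nu> \<le> 1" and ne: "holder_consts nrm gf \<nu> \<noteq> {}"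
  defines "q \<equiv> (1 + \<nu>) / (1 + 3 * \<nu>)"
  shows "A k powr q + q * uagm_rate \<nu> (holder_M nrm gf \<nu>) \<epsilon> \<le> A (Suc k) powr q"
proof -
  define \<tau> where "\<tau> = a (Suc k) / A (Suc k)"
  have A': "0 < A (Suc k)" by (rule A_Suc_pos)
  have \<tau>: "0 < \<tau>" "\<tau> \<le> 1" unfolding \<tau>_def using a_pos[of k] A_nonneg[of k] A_Suc[of k] by auto
  have q: "0 < q" "q \<le> 1" unfolding q_def using nu by auto
  have "t * dual_norm nrm (gf (y k)) - holder_M nrm gf \<nu> / (1 + \<nu>) * t powr (1 + \<nu>)
      \<le> \<tau> * (\<tau> * A (Suc k)) * (dual_norm nrm (gf (y k)))\<^sup>2 / 2 - \<epsilon> * \<tau> / 2" if "0 \<le> t" for t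
    using exact_line_search_bound[OF nu(1) ne that, where k = k] unfolding \<tau>_def .
  then have rate: "uagm_rate \<nu> (holder_M nrm gf \<nu>) \<epsilon> \<le> \<tau> * A (Suc k) powr q"
    unfolding q_def by (rule uagm_rate_le[OF nu holder_M_pos[OF ne] eps \<tau>(1) A' dual_norm_gradient_pos])
  have "A k = A (Suc k) * (1 - \<tau>)" unfolding \<tau>_def using A' A_Suc[of k] by (simp add: field_simps)
  then have "A k powr q = A (Suc k) powr q * (1 - \<tau>) powr q"
    using \<tau> A' by (simp add: powr_mult)
  also have "\<dots> \<le> A (Suc k) powr q * (1 - q * \<tau>)"
    using \<tau> q by (intro mult_left_mono one_minus_powr_le) auto
  also have "\<dots> = A (Suc k) powr q - q * (\<tau> * A (Suc k) powr q)"
    by (simp add: algebra_simps)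
  finally show ?thesis using mult_left_mono[OF rate, of q] q by linarith
qed

lemma A_powr_lower_bound:
  assumes nu: "0 \<le> \<nu>" "\<nu> \<le> 1" and ne: "holder_consts nrm gf \<nu> \<noteq> {}"
  defines "q \<equiv> (1 + \<nu>) / (1 + 3 * \<nu>)"
  shows "real N * (q * uagm_rate \<nu> (holder_M nrm gf \<nu>) \<epsilon>) \<le> A N powr q"
proof (induction N)
  case (Suc N)
  have "real (Suc N) * (q * uagm_rate \<nu> (holder_M nrm gf \<nu>) \<epsilon>)
      = real N * (q * uagm_rate \<nu> (holder_M nrm gf \<nu>) \<epsilon>) + q * uagm_rate \<nu> (holder_M nrm gf \<nu>) \<epsilon>"
    by (simp add: distrib_right)
  then show ?case
    using Suc.IH A_powr_growth[OF nu ne, of N, folded q_def] by linarith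
qed (simp add: A_0)

lemma A_ge_of_bound:
  assumes nu: "0 \<le> \<nu>" "\<nu> \<le> 1" and ne: "holder_consts nrm gf \<nu> \<noteq> {}" and \<Theta>: "0 < \<Theta>"
    and N: "uagm_bound \<nu> (holder_M nrm gf \<nu>) \<epsilon> \<Theta> \<le> real N"
  shows "2 * \<Theta> / \<epsilon> \<le> A N"
proof -
  define q where "q = (1 + \<nu>) / (1 + 3 * \<nu>)"
  define C where "C = uagm_rate \<nu> (holder_M nrm gf \<nu>) \<epsilon>"
  have q: "0 < q" "1 \<le> 2 * q" unfolding q_def using nu by auto
  have C: "0 \<le> C" unfolding C_def uagm_rate_def by simp
  have "(2 * \<Theta> / \<epsilon>) powr q \<le> 2 * q * (2 * \<Theta> / \<epsilon>) powr q"
    using q mult_right_mono[of 1 "2 * q" "(2 * \<Theta> / \<epsilon>) powr q"] by simp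
  also have "\<dots> = q * (uagm_bound \<nu> (holder_M nrm gf \<nu>) \<epsilon> \<Theta> * C)"
    unfolding C_def q_def using uagm_bound_mult_rate[OF nu holder_M_pos[OF ne] eps \<Theta>] by simp
  also have "\<dots> \<le> real N * (q * C)"
    using N q C by (simp add: mult_right_mono mult_left_mono mult.left_commute)
  also have "\<dots> \<le> A N powr q"
    unfolding q_def C_def by (rule A_powr_lower_bound[OF nu ne])
  finally have "(2 * \<Theta> / \<epsilon>) powr q \<le> A N powr q" .
  then show ?thesis
    using q \<Theta> eps A_nonneg[of N] powr_less_mono2[of q "A N" "2 * \<Theta> / \<epsilon>"] by fastforce
qed

theorem accuracy_reached:
  assumes nu: "0 \<le> \<nu>" "\<nu> \<le> 1" and ne: "holder_consts nrm gf \<nu> \<noteq> {}"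
    and \<Theta>: "bregman d gd xs (x 0) \<le> \<Theta>" and N: "uagm_bound \<nu> (holder_M nrm gf \<nu>) \<epsilon> \<Theta> \<le> real N"
  shows "f (x N) - f xs \<le> \<epsilon>"
proof (cases "0 < \<Theta>")
  case True
  have "0 < uagm_bound \<nu> (holder_M nrm gf \<nu>) \<epsilon> \<Theta>"
    unfolding uagm_bound_def using nu holder_M_pos[OF ne] eps True by auto
  then have "1 \<le> N" using N by simp
  then have AN: "0 < A N" using A_Suc_pos by (cases N) auto
  have "bregman d gd xs (x 0) / A N \<le> \<Theta> / A N"
    using \<Theta> AN by (simp add: divide_right_mono)
  also have "\<dots> \<le> \<epsilon> / 2"
    using A_ge_of_bound[OF nu ne True N] AN eps by (simp add: field_simps)
  finally show ?thesis using convergence_rate[OF \<open>1 \<le> N\<close>] by linarith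
next
  case False
  then have "(nrm (xs - x 0))\<^sup>2 / 2 \<le> 0" using bregman_ge[OF prox] \<Theta> by (smt (verit))
  then have "xs = x 0" using is_norm_eq_0[OF norm] by simp
  then show ?thesis
    using convergence_rate[of N] eps by (cases N) (auto simp: bregman_def)
qed

end

theorem mainTheorem10:
  fixes nrm :: "'a::euclidean_space \<Rightarrow> real"
    and d :: "'a \<Rightarrow> real" and gd :: "'a \<Rightarrow> 'a"
    and sharp :: "'a \<Rightarrow> 'a"
    and f :: "'a \<Rightarrow> real" and gf :: "'a \<Rightarrow> 'a"
    and xs :: 'a and \<epsilon> \<Theta> :: real
    and x v y :: "nat \<Rightarrow> 'a" and \<beta> h a A :: "nat \<Rightarrow> real"
  assumes norm: "is_norm nrm"
    and prox: "prox_function nrm d gd"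
    and sharp: "\<forall>g. nrm (sharp g) \<le> 1 \<and> g \<bullet> sharp g = dual_norm nrm g"
    and fclass: "(convex_on UNIV f \<and> (\<forall>p z. f z \<ge> f p + gf p \<bullet> (z - p)))
              \<or> ((\<forall>p. (f has_derivative (\<lambda>u. gf p \<bullet> u)) (at p)) \<and> continuous_on UNIV gf
                 \<and> (\<forall>p. f p - f xs \<le> gf p \<bullet> (p - xs)))"
    and xs_min: "\<forall>z. f xs \<le> f z"
    and eps: "\<epsilon> > 0"
    and Theta: "\<Theta> \<ge> bregman d gd xs (x 0)"
    and iter: "uagm_iterates nrm d gd sharp f gf \<epsilon> x v y \<beta> h a A"
    and nonzero: "\<forall>k. gf (y k) \<noteq> 0"
  shows "(\<forall>k\<ge>1. f (x k) - f xs \<le> bregman d gd xs (x 0) / A k + \<epsilon> / 2)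
       \<and> (\<forall>\<nu> (N::nat). 0 \<le> \<nu> \<and> \<nu> \<le> 1 \<and> holder_consts nrm gf \<nu> \<noteq> {}
            \<and> real N \<ge> uagm_bound \<nu> (holder_M nrm gf \<nu>) \<epsilon> \<Theta>
            \<longrightarrow> f (x N) - f xs \<le> \<epsilon>)"
proof -
  interpret uagm_method nrm d gd sharp f gf xs \<epsilon> x v y \<beta> h a A
    by unfold_locales (use assms in auto)
  show ?thesis
    using convergence_rate accuracy_reached Theta by blast
qed

end
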